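(* Let $\mathcal A$ be a commutative unital $C^*$-algebra, let $(E,\langle\cdot,\cdot\rangle)$ be a Hilbert $\mathcal A$-module, and let $\{x_i\}_{i\in\mathbb N}$ be a frame for $E$ with bounds $A,B$. Let $\xi\in E$ be such that $\langle\xi,\xi\rangle$ is invertible in $\mathcal A$, and equip $E$ with the standard $\mathcal A$-2-inner product $\langle x,y|z\rangle=\langle x,y\rangle\langle z,z\rangle-\langle x,z\rangle\langle z,y\rangle$. Then there exist real numbers $0<C\le D$ such that for all $x\in E$ $$C\langle x,x|\xi\rangle\le\sum_{i\in\mathbb N}\langle x,x_i|\xi\rangle\langle x_i,x|\xi\rangle\le D\langle x,x|\xi\rangle,$$ i.e. $\{x_i\}$ is an $\mathcal A$-2-frame associated to $\xi$ for this 2-inner product (one may take $D=B\|\langle\xi,\xi\rangle\|$).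
   Context: A Hilbert $\mathcal A$-module is a left $\mathcal A$-module $E$ with an $\mathcal A$-valued inner product $\langle\cdot,\cdot\rangle$ satisfying $\langle x,x\rangle\ge0$, $\langle x,x\rangle=0$ iff $x=0$, $\langle x,y\rangle=\langle y,x\rangle^*$, $\langle ax,by\rangle=a^*\langle x,y\rangle b$, complex-linear in the second variable, and complete for $\|x\|=\|\langle x,x\rangle\|^{1/2}$. A sequence $\{x_j\}_{j\in J}$ in $E$ is a frame for $E$ if there are real numbers $0<A\le B$ with $A\langle x,x\rangle\le\sum_{j}\langle x,x_j\rangle\langle x_j,x\rangle\le B\langle x,x\rangle$ for all $x\in E$ (order of self-adjoint elements of $\mathcal A$, series norm-convergent). *)

theory Defs
  imports Complex_Main
begin

definition cpos :: "('a::ring \<Rightarrow> 'a) \<Rightarrow> 'a \<Rightarrow> bool" where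
  "cpos star a \<longleftrightarrow> (\<exists>b. a = star b * b)"

definition cle :: "('a::ring \<Rightarrow> 'a) \<Rightarrow> 'a \<Rightarrow> 'a \<Rightarrow> bool" where
  "cle star a b \<longleftrightarrow> cpos star (b - a)"

text \<open>A commutative unital complex C*-algebra. The underlying type carries
  the (real) normed algebra structure; complex scalar multiplication is the
  parameter scaleC, compatible with the real one.\<close>

locale comm_unital_cstar_algebra =
  fixes scaleC :: "complex \<Rightarrow> 'a::{comm_ring_1, real_normed_algebra_1, banach} \<Rightarrow> 'a"
    and star :: "'a \<Rightarrow> 'a"
  assumes scaleC_add_left: "scaleC (c + d) a = scaleC c a + scaleC d a"
    and scaleC_add_right: "scaleC c (a + b) = scaleC c a + scaleC c b"
    and scaleC_mult: "scaleC (c * d) a = scaleC c (scaleC d a)"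
    and scaleC_of_real: "scaleC (complex_of_real r) a = r *\<^sub>R a"
    and scaleC_norm: "norm (scaleC c a) = cmod c * norm a"
    and scaleC_left_mult: "scaleC c (a * b) = scaleC c a * b"
    and star_add: "star (a + b) = star a + star b"
    and star_scaleC: "star (scaleC c a) = scaleC (cnj c) (star a)"
    and star_mult: "star (a * b) = star b * star a"
    and star_star: "star (star a) = a"
    and cstar_identity: "norm (star a * a) = norm a ^ 2"

text \<open>The complex scalar multiplication on E is
  c x = (c 1) x (compatibility of the complex and module structures).\<close>

definition hm_norm :: "('m \<Rightarrow> 'm \<Rightarrow> 'a::real_normed_vector) \<Rightarrow> 'm \<Rightarrow> real" where
  "hm_norm ip x = sqrt (norm (ip x x))"

locale hilbert_module = comm_unital_cstar_algebra scaleC star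
  for scaleC :: "complex \<Rightarrow> 'a::{comm_ring_1, real_normed_algebra_1, banach} \<Rightarrow> 'a"
    and star :: "'a \<Rightarrow> 'a" +
  fixes act :: "'a \<Rightarrow> 'm::ab_group_add \<Rightarrow> 'm"
    and ip :: "'m \<Rightarrow> 'm \<Rightarrow> 'a"
  assumes act_add_left: "act (a + b) x = act a x + act b x"
    and act_add_right: "act a (x + y) = act a x + act a y"
    and act_mult: "act (a * b) x = act a (act b x)"
    and act_one: "act 1 x = x"
    and ip_pos: "cpos star (ip x x)"
    and ip_zero: "ip x x = 0 \<longleftrightarrow> x = 0"
    and ip_sym: "ip x y = star (ip y x)"
    and ip_act: "ip (act a x) (act b y) = star a * ip x y * b"
    and ip_add_right: "ip x (y + z) = ip x y + ip x z"
    and ip_scale_right: "ip x (act (scaleC c 1) y) = scaleC c (ip x y)"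
    and complete: "\<And>X::nat \<Rightarrow> 'm.
        (\<forall>e>0. \<exists>N. \<forall>m\<ge>N. \<forall>n\<ge>N. hm_norm ip (X m - X n) < e) \<Longrightarrow>
        (\<exists>L. \<forall>e>0. \<exists>N. \<forall>n\<ge>N. hm_norm ip (X n - L) < e)"

definition is_frame :: "('a::{ring, real_normed_vector} \<Rightarrow> 'a) \<Rightarrow> ('m \<Rightarrow> 'm \<Rightarrow> 'a) \<Rightarrow> (nat \<Rightarrow> 'm) \<Rightarrow> bool" where
  "is_frame star ip xs \<longleftrightarrow> (\<exists>A B::real. 0 < A \<and> A \<le> B \<and>
     (\<forall>x. summable (\<lambda>j. ip x (xs j) * ip (xs j) x) \<and>
          cle star (A *\<^sub>R ip x x) (\<Sum>j. ip x (xs j) * ip (xs j) x) \<and>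
          cle star (\<Sum>j. ip x (xs j) * ip (xs j) x) (B *\<^sub>R ip x x)))"

definition two_ip :: "('m \<Rightarrow> 'm \<Rightarrow> 'a::ring) \<Rightarrow> 'm \<Rightarrow> 'm \<Rightarrow> 'm \<Rightarrow> 'a" where
  "two_ip ip x y z = ip x y * ip z z - ip x z * ip z y"

end

theory Submission
  imports Defs "HOL-Computational_Algebra.Formal_Power_Series"
begin

text \<open>For \<open>z = \<langle>\<xi>,\<xi>\<rangle>x - \<langle>\<xi>,x\<rangle>\<xi>\<close> one has \<open>\<langle>z,y\<rangle> = \<langle>x,y|\<xi>\<rangle>\<close>, \<open>\<langle>y,z\<rangle> = \<langle>y,x|\<xi>\<rangle>\<close> and
  \<open>\<langle>z,z\<rangle> = \<langle>x,x|\<xi>\<rangle>\<langle>\<xi>,\<xi>\<rangle>\<close>, so the 2-frame sum at \<open>x\<close> is the frame sum at \<open>z\<close>.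
  Since \<open>\<langle>\<xi>,\<xi>\<rangle>\<close> is positive and invertible,
  \<open>\<parallel>\<langle>\<xi>,\<xi>\<rangle>\<^sup>-\<^sup>1\<parallel>\<^sup>-\<^sup>1 \<le> \<langle>\<xi>,\<xi>\<rangle> \<le> \<parallel>\<langle>\<xi>,\<xi>\<rangle>\<parallel>\<close>, and multiplying these by the positive
  element \<open>\<langle>x,x|\<xi>\<rangle>\<close> turns the frame bounds \<open>A, B\<close> for \<open>z\<close> into the 2-frame bounds
  \<open>A / \<parallel>\<langle>\<xi>,\<xi>\<rangle>\<^sup>-\<^sup>1\<parallel>\<close> and \<open>B \<parallel>\<langle>\<xi>,\<xi>\<rangle>\<parallel>\<close>.
  Because positivity is defined as being of the form \<open>b\<^sup>*b\<close>, the order facts used here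
  (sums of positives are positive, \<open>a \<le> \<parallel>a\<parallel>\<close> for self-adjoint \<open>a\<close>) need square
  roots; these come from the binomial series of \<open>\<surd>(1 - t)\<close>, which converges
  absolutely on the closed unit disc.\<close>

section \<open>The binomial series of the square root\<close>

definition sqrt_coeff :: "nat \<Rightarrow> real" where
  "sqrt_coeff n = (-1)^n * ((1/2::real) gchoose n)"

lemma sqrt_coeff_Suc:
  "sqrt_coeff (Suc k) = sqrt_coeff k * ((of_nat k - 1/2) / (of_nat k + 1))"
proof -
  have "(1/2::real) * ((1/2) gchoose k)
      = of_nat k * ((1/2) gchoose k) + of_nat (Suc k) * ((1/2) gchoose (Suc k))"
    by (rule gbinomial_mult_1)
  hence "((1/2::real) gchoose (Suc k)) = (1/2 - of_nat k) * ((1/2) gchoose k) / (of_nat k + 1)"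
    by (simp add: field_simps)
  hence "sqrt_coeff (Suc k) = (-1)^Suc k * ((1/2 - of_nat k) * ((1/2) gchoose k) / (of_nat k + 1))"
    unfolding sqrt_coeff_def by simp
  thus ?thesis
    unfolding sqrt_coeff_def by (simp add: field_simps)
qed

lemma sqrt_coeff_nonpos: "n \<ge> 1 \<Longrightarrow> sqrt_coeff n \<le> 0"
proof (induction n)
  case (Suc n)
  show ?case
  proof (cases "n = 0")
    case True
    then show ?thesis by (simp add: sqrt_coeff_def)
  next
    case False
    have "(of_nat n - 1/2) / (of_nat n + 1) \<ge> (0::real)" using False by simp
    moreover have "sqrt_coeff n \<le> 0" using Suc False by simp
    ultimately show ?thesis unfolding sqrt_coeff_Suc[of n] by (metis mult_nonpos_nonneg)
  qed
qed simp

lemma sum_sqrt_coeff_nonneg: "(\<Sum>k\<le>m. sqrt_coeff k) \<ge> 0"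
proof -
  have "(\<Sum>k\<le>m. sqrt_coeff k) = (\<Sum>k\<le>m. ((1/2::real) gchoose k) * (- 1) ^ k)"
    by (simp add: sqrt_coeff_def mult.commute)
  also have "\<dots> = (-1)^m * ((1/2 - 1) gchoose m)" by (rule gbinomial_sum_lower_neg)
  also have "\<dots> = (-1)^m * ((-1)^m * ((of_nat m - (1/2-1) - 1) gchoose m))"
    by (subst gbinomial_negated_upper) simp
  also have "\<dots> = ((of_nat m - 1/2) gchoose m)"
    by (simp flip: power_mult_distrib)
  also have "\<dots> \<ge> 0"
    unfolding gbinomial_altdef_of_nat by (intro prod_nonneg) (auto simp: of_nat_diff)
  finally show ?thesis .
qed

text \<open>All coefficients but the first are nonpositive and all partial sums are
  nonnegative, so the partial sums of absolute values stay below \<open>2\<close>.\<close>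

lemma summable_abs_sqrt_coeff: "summable (\<lambda>n. \<bar>sqrt_coeff n\<bar>)"
proof (rule summableI_nonneg_bounded[where x=2])
  fix n
  show "(\<Sum>i<n. \<bar>sqrt_coeff i\<bar>) \<le> 2"
  proof (cases n)
    case (Suc m)
    have "\<And>i. \<bar>sqrt_coeff i\<bar> = (if i = 0 then 2 else 0) - sqrt_coeff i"
      using sqrt_coeff_nonpos by (auto simp: sqrt_coeff_def)
    hence "(\<Sum>i<n. \<bar>sqrt_coeff i\<bar>) = (\<Sum>i<n. (if i = 0 then 2 else 0)) - (\<Sum>i<n. sqrt_coeff i)"
      by (simp add: sum_subtractf)
    also have "(\<Sum>i<n. (if i = 0 then 2 else (0::real))) = 2" using Suc by simp
    also have "(\<Sum>i<n. sqrt_coeff i) = (\<Sum>i\<le>m. sqrt_coeff i)" using Suc lessThan_Suc_atMost by simp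
    finally show ?thesis using sum_sqrt_coeff_nonneg[of m] by simp
  qed simp
qed simp

lemma sqrt_coeff_convolution:
  "(\<Sum>i\<le>k. sqrt_coeff i * sqrt_coeff (k - i)) = (if k = 0 then 1 else if k = 1 then -1 else 0)"
proof -
  have "(\<Sum>i\<le>k. sqrt_coeff i * sqrt_coeff (k - i))
      = (-1)^k * (\<Sum>i\<in>{0..k}. ((1/2::real) gchoose i) * ((1/2) gchoose (k - i)))"
    unfolding sqrt_coeff_def sum_distrib_left atMost_atLeast0
    by (intro sum.cong refl) (auto simp: algebra_simps simp flip: power_add)
  also have "\<dots> = (-1)^k * ((1::real) gchoose k)"
    using gbinomial_Vandermonde[of "1/2::real" "1/2" k] by simp
  also have "\<dots> = (if k = 0 then 1 else if k = 1 then -1 else 0)"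
    using binomial_gbinomial[of 1 k, where 'a=real] by (auto simp: binomial_eq_0)
  finally show ?thesis .
qed

section \<open>Square roots and order in a commutative C*-algebra\<close>

context comm_unital_cstar_algebra
begin

lemma star_zero: "star 0 = 0"
  using star_add[of 0 0] by simp

lemma star_minus: "star (- a) = - star a"
  using star_add[of a "-a"] star_zero by (metis add.right_inverse minus_unique)

lemma star_diff: "star (a - b) = star a - star b"
  using star_add[of a "-b"] star_minus by simp

lemma star_one: "star 1 = 1"
  using star_mult[of "star 1" 1] by (simp add: star_star)

lemma star_scaleR: "star (r *\<^sub>R a) = r *\<^sub>R star a"
  using star_scaleC[of "complex_of_real r" a] by (simp add: scaleC_of_real)

lemma star_power: "star (h ^ n) = star h ^ n"
  by (induction n) (auto simp: star_one star_mult mult.commute)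

lemma norm_star: "norm (star a) = norm a"
proof -
  have le: "norm c \<le> norm (star c)" for c
  proof (cases "c = 0")
    case False
    have "norm c * norm c = norm (star c * c)" by (simp add: cstar_identity power2_eq_square)
    also have "\<dots> \<le> norm (star c) * norm c" by (rule norm_mult_ineq)
    finally show ?thesis using False by simp
  qed simp
  show ?thesis using le[of a] le[of "star a"] by (simp add: star_star)
qed

lemma bounded_linear_star: "bounded_linear star"
  by (rule bounded_linear_intro[where K=1]) (auto simp: star_add star_scaleR norm_star)

definition imag_one :: 'a where
  "imag_one = scaleC \<i> 1"

lemma scaleC_eq_mult: "scaleC c a = scaleC c 1 * a"
  using scaleC_left_mult[of c 1 a] by simp

lemma imag_one_squared: "imag_one * imag_one = -1"
proof -
  have "imag_one * imag_one = scaleC \<i> (scaleC \<i> 1)"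
    unfolding imag_one_def by (metis scaleC_eq_mult)
  also have "\<dots> = scaleC (-1) 1" by (simp flip: scaleC_mult)
  also have "\<dots> = -1" using scaleC_of_real[of "-1" 1] by simp
  finally show ?thesis .
qed

lemma star_imag_one: "star imag_one = - imag_one"
proof -
  have "star imag_one = scaleC (-1) (scaleC \<i> 1)"
    unfolding imag_one_def by (simp add: star_scaleC star_one flip: scaleC_mult)
  also have "\<dots> = - imag_one" using scaleC_of_real[of "-1" imag_one] by (simp add: imag_one_def)
  finally show ?thesis .
qed

lemma selfadjoint_sqrt_one_minus:
  assumes "star h = h" and "norm h \<le> 1"
  shows "\<exists>r. star r = r \<and> r * r = 1 - h"
proof -
  define f where "f n = sqrt_coeff n *\<^sub>R h ^ n" for n
  have "norm (f n) \<le> \<bar>sqrt_coeff n\<bar>" for n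
  proof -
    have "norm (h ^ n) \<le> 1"
      using norm_power_ineq[of h n] power_le_one[OF norm_ge_zero assms(2), of n] by linarith
    thus ?thesis by (simp add: f_def mult_left_le)
  qed
  hence summable_norm_f: "summable (\<lambda>n. norm (f n))"
    by (intro summable_comparison_test'[OF summable_abs_sqrt_coeff]) auto
  define r where "r = suminf f"
  have "star r = (\<Sum>n. star (f n))"
    unfolding r_def by (rule bounded_linear.suminf[OF bounded_linear_star summable_norm_cancel[OF summable_norm_f]])
  also have "(\<lambda>n. star (f n)) = f" by (auto simp: f_def star_scaleR star_power assms(1))
  finally have "star r = r" by (simp add: r_def)
  have "r * r = (\<Sum>k. \<Sum>i\<le>k. f i * f (k - i))"
    unfolding r_def by (rule Cauchy_product[OF summable_norm_f summable_norm_f])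
  also have "(\<lambda>k. \<Sum>i\<le>k. f i * f (k - i)) = (\<lambda>k. (\<Sum>i\<le>k. sqrt_coeff i * sqrt_coeff (k - i)) *\<^sub>R h ^ k)"
    by (auto simp: f_def scaleR_sum_left simp flip: power_add intro!: sum.cong)
  also have "\<dots> = (\<lambda>k. (if k = 0 then 1 else if k = 1 then -1 else 0) *\<^sub>R h ^ k)"
    by (simp add: sqrt_coeff_convolution)
  also have "suminf \<dots> = (\<Sum>k\<in>{0,1}. (if k = 0 then 1 else if k = 1 then -1 else 0) *\<^sub>R h ^ k)"
    by (rule suminf_finite) auto
  also have "\<dots> = 1 - h" by simp
  finally show ?thesis using \<open>star r = r\<close> by blast
qed

text \<open>\<open>r + i s\<close> is unitary, so its norm is \<open>1\<close>, and \<open>r\<close> is its real part.\<close>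

lemma norm_le_one_if_sum_of_squares_one:
  assumes "star r = r" "star s = s" "r * r + s * s = 1"
  shows "norm r \<le> 1"
proof -
  define u where "u = r + imag_one * s"
  have star_u: "star u = r - imag_one * s"
    unfolding u_def by (simp add: star_add star_mult assms star_imag_one mult.commute)
  have "star u * u = (r - imag_one * s) * (r + imag_one * s)" using star_u u_def by simp
  also have "\<dots> = r * r - (imag_one * imag_one) * (s * s)" by (simp add: algebra_simps)
  also have "\<dots> = 1" using assms(3) by (simp add: imag_one_squared)
  finally have "norm u ^ 2 = 1" using cstar_identity[of u] by simp
  hence "norm u = 1" using norm_ge_zero[of u] by (auto simp: power2_eq_1_iff)
  have "r = (1/2) *\<^sub>R (u + star u)" using star_u u_def by (simp add: scaleR_2)
  hence "norm r \<le> (1/2) * (norm u + norm (star u))"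
    using norm_triangle_ineq[of u "star u"] by simp
  thus ?thesis using \<open>norm u = 1\<close> norm_star by simp
qed

lemma selfadjoint_sqrt_one_minus_square:
  assumes "star a = a" and "norm a \<le> 1"
  shows "\<exists>t. star t = t \<and> norm t \<le> 1 \<and> t * t = 1 - a * a"
proof -
  have "norm (a * a) \<le> 1"
    using norm_mult_ineq[of a a] mult_le_one[OF assms(2) norm_ge_zero assms(2)] by linarith
  moreover have "star (a * a) = a * a" by (simp add: star_mult assms(1))
  ultimately obtain t where t: "star t = t" "t * t = 1 - a * a"
    using selfadjoint_sqrt_one_minus by blast
  have "norm t \<le> 1"
    by (rule norm_le_one_if_sum_of_squares_one[of t a]) (use t assms(1) in auto)
  with t show ?thesis by blast
qed

lemma sum_of_squares_is_square:
  assumes "star u = u" "star v = v"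
  shows "\<exists>w. star w = w \<and> u * u + v * v = w * w"
proof -
  define c where "c = 1 / (norm u + norm v + 1)"
  have "c > 0" "c * norm u \<le> 1" "c * norm v \<le> 1"
    unfolding c_def by (simp_all add: add_pos_nonneg field_simps)
  obtain t1 where t1: "star t1 = t1" "norm t1 \<le> 1" "t1 * t1 = 1 - (c *\<^sub>R u) * (c *\<^sub>R u)"
    using selfadjoint_sqrt_one_minus_square[of "c *\<^sub>R u"] assms(1) \<open>c > 0\<close> \<open>c * norm u \<le> 1\<close>
    by (auto simp: star_scaleR)
  obtain t2 where t2: "star t2 = t2" "norm t2 \<le> 1" "t2 * t2 = 1 - (c *\<^sub>R v) * (c *\<^sub>R v)"
    using selfadjoint_sqrt_one_minus_square[of "c *\<^sub>R v"] assms(2) \<open>c > 0\<close> \<open>c * norm v \<le> 1\<close>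
    by (auto simp: star_scaleR)
  define h where "h = (1/2) *\<^sub>R (t1 * t1 + t2 * t2)"
  have "star h = h" unfolding h_def by (simp add: star_scaleR star_add star_mult t1(1) t2(1))
  have "norm (t1 * t1) \<le> 1" "norm (t2 * t2) \<le> 1"
    using norm_mult_ineq[of t1 t1] norm_mult_ineq[of t2 t2]
      mult_le_one[OF t1(2) norm_ge_zero t1(2)] mult_le_one[OF t2(2) norm_ge_zero t2(2)] by linarith+
  hence "norm h \<le> 1"
    unfolding h_def using norm_triangle_ineq[of "t1 * t1" "t2 * t2"] by simp
  then obtain s where s: "star s = s" "s * s = 1 - h"
    using selfadjoint_sqrt_one_minus \<open>star h = h\<close> by blast
  have "(c * c) *\<^sub>R (u * u + v * v) = (1 - t1 * t1) + (1 - t2 * t2)"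
    using t1(3) t2(3) by (simp add: scaleR_add_right)
  also have "\<dots> = 2 *\<^sub>R (s * s)"
    unfolding s h_def by (simp add: scaleR_diff_right scaleR_2 algebra_simps)
  finally have e: "(c * c) *\<^sub>R (u * u + v * v) = 2 *\<^sub>R (s * s)" .
  define w where "w = (sqrt 2 / c) *\<^sub>R s"
  have "w * w = (2 / (c * c)) *\<^sub>R (s * s)" unfolding w_def by (simp add: field_simps)
  also have "\<dots> = u * u + v * v"
    using arg_cong[OF e, of "\<lambda>z. (1 / (c * c)) *\<^sub>R z"] \<open>c > 0\<close> by (simp add: field_simps)
  finally have "w * w = u * u + v * v" .
  moreover have "star w = w" by (simp add: w_def star_scaleR s(1))
  ultimately show ?thesis by metis
qed

lemma cpos_iff_selfadjoint_square: "cpos star a \<longleftrightarrow> (\<exists>s. star s = s \<and> a = s * s)"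
proof
  assume "\<exists>s. star s = s \<and> a = s * s"
  thus "cpos star a" unfolding cpos_def by metis
next
  assume "cpos star a"
  then obtain x where x: "a = star x * x" unfolding cpos_def by blast
  define u where "u = (1/2) *\<^sub>R (x + star x)"
  define v where "v = (1/2) *\<^sub>R (imag_one * (star x - x))"
  have "star u = u" unfolding u_def by (simp add: star_scaleR star_add star_star add.commute)
  moreover have "star v = v" unfolding v_def
    by (simp add: star_scaleR star_mult star_diff star_star star_imag_one algebra_simps)
  moreover have "a = u * u + v * v"
  proof -
    have "u * u + v * v = (1/4) *\<^sub>R ((x + star x) * (x + star x)
        + (imag_one * imag_one) * ((star x - x) * (star x - x)))"
      unfolding u_def v_def by (simp add: algebra_simps scaleR_add_right)
    also have "(x + star x) * (x + star x) + (imag_one * imag_one) * ((star x - x) * (star x - x))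
        = 4 *\<^sub>R (star x * x)"
      using scaleR_add_left[of 2 2 "star x * x"] by (simp add: imag_one_squared algebra_simps scaleR_2)
    finally show ?thesis using x by simp
  qed
  ultimately show "\<exists>s. star s = s \<and> a = s * s" using sum_of_squares_is_square by metis
qed

lemma cpos_add: "cpos star a \<Longrightarrow> cpos star b \<Longrightarrow> cpos star (a + b)"
  unfolding cpos_iff_selfadjoint_square using sum_of_squares_is_square by metis

lemma cpos_mult: "cpos star a \<Longrightarrow> cpos star b \<Longrightarrow> cpos star (a * b)"
  unfolding cpos_def
proof (elim exE)
  fix x y assume "a = star x * x" "b = star y * y"
  hence "a * b = star (x * y) * (x * y)" by (simp add: star_mult algebra_simps)
  thus "\<exists>z. a * b = star z * z" by blast
qed

lemma cpos_scaleR: "0 \<le> r \<Longrightarrow> cpos star a \<Longrightarrow> cpos star (r *\<^sub>R a)"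
  unfolding cpos_def
proof (elim exE)
  fix x assume "0 \<le> r" "a = star x * x"
  hence "r *\<^sub>R a = star (sqrt r *\<^sub>R x) * (sqrt r *\<^sub>R x)" by (simp add: star_scaleR)
  thus "\<exists>z. r *\<^sub>R a = star z * z" by blast
qed

lemma cpos_imp_selfadjoint: "cpos star a \<Longrightarrow> star a = a"
  unfolding cpos_def by (auto simp: star_mult star_star)

lemma cpos_inverse:
  assumes "cpos star a" and "a * b = 1"
  shows "cpos star b"
proof -
  obtain x where x: "a = star x * x" using assms(1) unfolding cpos_def by blast
  have "star b * a = 1"
    using arg_cong[OF assms(2), of star] by (simp add: star_mult star_one cpos_imp_selfadjoint[OF assms(1)])
  have "star b = b"
  proof -
    have "star b = star b * (a * b)" using assms(2) by simp
    also have "\<dots> = b" using \<open>star b * a = 1\<close> by (simp flip: mult.assoc)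
    finally show ?thesis .
  qed
  have "b = b * a * b" using assms(2) by (simp add: mult.commute)
  also have "\<dots> = star (x * b) * (x * b)" using x \<open>star b = b\<close> by (simp add: star_mult algebra_simps)
  finally show ?thesis unfolding cpos_def by blast
qed

lemma cle_trans: "cle star a b \<Longrightarrow> cle star b c \<Longrightarrow> cle star a c"
  unfolding cle_def using cpos_add by fastforce

lemma cle_mult_left: "cpos star c \<Longrightarrow> cle star a b \<Longrightarrow> cle star (c * a) (c * b)"
  unfolding cle_def using cpos_mult[of c "b - a"] by (simp add: right_diff_distrib)

lemma cle_scaleR: "0 \<le> r \<Longrightarrow> cle star a b \<Longrightarrow> cle star (r *\<^sub>R a) (r *\<^sub>R b)"
  unfolding cle_def using cpos_scaleR[of r "b - a"] by (simp add: scaleR_diff_right)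

lemma selfadjoint_le_norm:
  assumes "star a = a"
  shows "cle star a (norm a *\<^sub>R 1)"
proof (cases "a = 0")
  case True
  hence "norm a *\<^sub>R 1 - a = star 0 * 0" by simp
  thus ?thesis unfolding cle_def cpos_def by blast
next
  case False
  define h where "h = (1 / norm a) *\<^sub>R a"
  have "star h = h" "norm h \<le> 1" using assms False by (simp_all add: h_def star_scaleR)
  then obtain r where r: "star r = r" "r * r = 1 - h" using selfadjoint_sqrt_one_minus by blast
  have "norm a *\<^sub>R 1 - a = norm a *\<^sub>R (star r * r)"
    using False by (simp add: r h_def scaleR_diff_right)
  moreover have "cpos star (norm a *\<^sub>R (star r * r))"
    by (intro cpos_scaleR norm_ge_zero) (auto simp: cpos_def)
  ultimately show ?thesis unfolding cle_def by simp
qed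

lemma inverse_norm_le:
  assumes "cpos star a" and "a * b = 1"
  shows "cle star ((1 / norm b) *\<^sub>R 1) a"
proof -
  have "b \<noteq> 0" using assms(2) by auto
  have "cpos star b" by (rule cpos_inverse[OF assms])
  hence "cpos star (norm b *\<^sub>R 1 - b)"
    using selfadjoint_le_norm cpos_imp_selfadjoint unfolding cle_def by blast
  hence "cpos star (a * ((1 / norm b) *\<^sub>R (norm b *\<^sub>R 1 - b)))"
    by (intro cpos_mult cpos_scaleR assms(1)) simp_all
  also have "a * ((1 / norm b) *\<^sub>R (norm b *\<^sub>R 1 - b)) = a - (1 / norm b) *\<^sub>R 1"
    using \<open>b \<noteq> 0\<close> assms(2) by (simp add: scaleR_diff_right right_diff_distrib)
  finally show ?thesis unfolding cle_def .
qed

end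

lemma one_div_norm_le_norm_if_mult_eq_one:
  fixes a b :: "'a::real_normed_algebra_1"
  assumes "a * b = 1"
  shows "1 / norm b \<le> norm a"
proof -
  have "1 \<le> norm a * norm b" using norm_mult_ineq[of a b] assms by simp
  moreover have "b \<noteq> 0" using assms by auto
  ultimately show ?thesis by (simp add: divide_le_eq)
qed

section \<open>The vector representing the 2-inner product\<close>

context hilbert_module
begin

lemma ip_add_left: "ip (x + y) z = ip x z + ip y z"
  by (metis ip_sym ip_add_right star_add)

lemma ip_diff_left: "ip (x - y) z = ip x z - ip y z"
  using ip_add_left[of "x - y" y z] by (simp add: algebra_simps)

lemma ip_diff_right: "ip z (x - y) = ip z x - ip z y"
  using ip_add_right[of z "x - y" y] by (simp add: algebra_simps)

lemma ip_act_left: "ip (act a x) y = star a * ip x y"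
  using ip_act[of a x 1 y] by (simp add: act_one)

lemma ip_act_right: "ip x (act b y) = ip x y * b"
  using ip_act[of 1 x b y] by (simp add: act_one star_one)

definition two_ip_vec :: "'m \<Rightarrow> 'm \<Rightarrow> 'm" where
  "two_ip_vec \<xi> x = act (ip \<xi> \<xi>) x - act (ip \<xi> x) \<xi>"

lemma ip_two_ip_vec_left: "ip (two_ip_vec \<xi> x) y = two_ip ip x y \<xi>"
proof -
  have "star (ip \<xi> \<xi>) = ip \<xi> \<xi>" "star (ip \<xi> x) = ip x \<xi>"
    using ip_sym by metis+
  thus ?thesis
    unfolding two_ip_vec_def two_ip_def ip_diff_left ip_act_left by (simp add: mult.commute)
qed

lemma ip_two_ip_vec_right: "ip y (two_ip_vec \<xi> x) = two_ip ip y x \<xi>"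
  unfolding two_ip_vec_def two_ip_def ip_diff_right ip_act_right ..

lemma ip_two_ip_vec_self:
  "ip (two_ip_vec \<xi> x) (two_ip_vec \<xi> x) = two_ip ip x x \<xi> * ip \<xi> \<xi>"
proof -
  have "two_ip ip x \<xi> \<xi> = 0" unfolding two_ip_def by (simp add: mult.commute)
  thus ?thesis
    by (subst (2) two_ip_vec_def) (simp add: ip_diff_right ip_act_right ip_two_ip_vec_left)
qed

lemma cpos_two_ip_self:
  assumes "ip \<xi> \<xi> * b = 1"
  shows "cpos star (two_ip ip x x \<xi>)"
proof -
  have "two_ip ip x x \<xi> = ip (two_ip_vec \<xi> x) (two_ip_vec \<xi> x) * b"
    using assms by (simp add: ip_two_ip_vec_self mult.assoc)
  thus ?thesis using cpos_mult[OF ip_pos cpos_inverse[OF ip_pos assms]] by simp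
qed

lemma two_ip_bounds_from_ip_bounds:
  assumes b: "ip \<xi> \<xi> * b = 1" and "0 \<le> A" "0 \<le> B"
    and "cle star (A *\<^sub>R ip (two_ip_vec \<xi> x) (two_ip_vec \<xi> x)) S"
    and "cle star S (B *\<^sub>R ip (two_ip_vec \<xi> x) (two_ip_vec \<xi> x))"
  shows "cle star ((A / norm b) *\<^sub>R two_ip ip x x \<xi>) S"
    and "cle star S ((B * norm (ip \<xi> \<xi>)) *\<^sub>R two_ip ip x x \<xi>)"
proof -
  define T where "T = two_ip ip x x \<xi>"
  have T: "cpos star T" unfolding T_def by (rule cpos_two_ip_self[OF b])
  have "cle star ((1 / norm b) *\<^sub>R 1) (ip \<xi> \<xi>)" by (rule inverse_norm_le[OF ip_pos b])
  from cle_scaleR[OF \<open>0 \<le> A\<close> cle_mult_left[OF T this]]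
  have "cle star ((A / norm b) *\<^sub>R T) (A *\<^sub>R (T * ip \<xi> \<xi>))" by simp
  thus "cle star ((A / norm b) *\<^sub>R two_ip ip x x \<xi>) S"
    using cle_trans assms(4) unfolding ip_two_ip_vec_self T_def by blast
  have "cle star (ip \<xi> \<xi>) (norm (ip \<xi> \<xi>) *\<^sub>R 1)" by (rule selfadjoint_le_norm) (metis ip_sym)
  from cle_scaleR[OF \<open>0 \<le> B\<close> cle_mult_left[OF T this]]
  have "cle star (B *\<^sub>R (T * ip \<xi> \<xi>)) ((B * norm (ip \<xi> \<xi>)) *\<^sub>R T)" by simp
  thus "cle star S ((B * norm (ip \<xi> \<xi>)) *\<^sub>R two_ip ip x x \<xi>)"
    using cle_trans assms(5) unfolding ip_two_ip_vec_self T_def by blast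
qed

end

theorem proposition2p2:
  fixes scaleC :: "complex \<Rightarrow> 'a::{comm_ring_1, real_normed_algebra_1, banach} \<Rightarrow> 'a"
    and star :: "'a \<Rightarrow> 'a"
    and act :: "'a \<Rightarrow> 'm::ab_group_add \<Rightarrow> 'm"
    and ip :: "'m \<Rightarrow> 'm \<Rightarrow> 'a"
    and xs :: "nat \<Rightarrow> 'm"
    and \<xi> :: 'm
  assumes "hilbert_module scaleC star act ip"
    and "is_frame star ip xs"
    and "\<exists>b. ip \<xi> \<xi> * b = 1 \<and> b * ip \<xi> \<xi> = 1"
  shows "\<exists>C D::real. 0 < C \<and> C \<le> D \<and>
     (\<forall>x. summable (\<lambda>i. two_ip ip x (xs i) \<xi> * two_ip ip (xs i) x \<xi>) \<and>
          cle star (C *\<^sub>R two_ip ip x x \<xi>) (\<Sum>i. two_ip ip x (xs i) \<xi> * two_ip ip (xs i) x \<xi>) \<and>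
          cle star (\<Sum>i. two_ip ip x (xs i) \<xi> * two_ip ip (xs i) x \<xi>) (D *\<^sub>R two_ip ip x x \<xi>))"
proof -
  interpret hilbert_module scaleC star act ip by fact
  obtain A B :: real where "0 < A" "A \<le> B"
    and frame: "\<And>x. summable (\<lambda>j. ip x (xs j) * ip (xs j) x) \<and>
          cle star (A *\<^sub>R ip x x) (\<Sum>j. ip x (xs j) * ip (xs j) x) \<and>
          cle star (\<Sum>j. ip x (xs j) * ip (xs j) x) (B *\<^sub>R ip x x)"
    using assms(2) unfolding is_frame_def by blast
  obtain b where b: "ip \<xi> \<xi> * b = 1" using assms(3) by blast
  have "0 < norm b" using b by auto
  have "A * (1 / norm b) \<le> B * norm (ip \<xi> \<xi>)"
    using one_div_norm_le_norm_if_mult_eq_one[OF b] \<open>0 < A\<close> \<open>A \<le> B\<close> by (intro mult_mono) auto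
  hence "A / norm b \<le> B * norm (ip \<xi> \<xi>)" by simp
  moreover have "0 < A / norm b" using \<open>0 < A\<close> \<open>0 < norm b\<close> by simp
  moreover have "summable (\<lambda>i. two_ip ip x (xs i) \<xi> * two_ip ip (xs i) x \<xi>) \<and>
    cle star ((A / norm b) *\<^sub>R two_ip ip x x \<xi>) (\<Sum>i. two_ip ip x (xs i) \<xi> * two_ip ip (xs i) x \<xi>) \<and>
    cle star (\<Sum>i. two_ip ip x (xs i) \<xi> * two_ip ip (xs i) x \<xi>) ((B * norm (ip \<xi> \<xi>)) *\<^sub>R two_ip ip x x \<xi>)"
    for x
  proof -
    define z where "z = two_ip_vec \<xi> x"
    have "(\<lambda>i. two_ip ip x (xs i) \<xi> * two_ip ip (xs i) x \<xi>) = (\<lambda>j. ip z (xs j) * ip (xs j) z)"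
      by (simp add: z_def ip_two_ip_vec_left ip_two_ip_vec_right)
    thus ?thesis
      using frame[of z] two_ip_bounds_from_ip_bounds[OF b, of A B x] \<open>0 < A\<close> \<open>A \<le> B\<close>
      unfolding z_def by simp
  qed
  ultimately show ?thesis by blast
qed

end
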